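(* Let $\mathcal S$ and $\Sigma$ be two finite fundamental systems, generating the groups $G$ and $\Gamma$ respectively. Assume there exist an orientation preserving homeomorphism $h:[0,1]\to[0,1]$ and a bijection $\varphi:\mathcal S\to\Sigma$, written $\varphi(f,S_f,I_f)=(\varphi(f),S_{\varphi(f)},I_{\varphi(f)})$, such that for every $(f,S_f,I_f)\in\mathcal S$ one has $S_{\varphi(f)}=h(S_f)$ and $I_{\varphi(f)}=h(I_f)$. Then there is a homeomorphism $\tilde h:[0,1]\to[0,1]$ such that $\tilde h f\tilde h^{-1}=\varphi(f)$ for every $(f,S_f,I_f)\in\mathcal S$; in particular $\Gamma=\{\tilde h g\tilde h^{-1}: g\in G\}$.
   Context: A homeomorphism $f$ of $[0,1]$ is simple if $[0,1]\setminus\mathrm{Fix}(f)$ has exactly one connected component; its closure is the support $S_f$ of $f$. It is positive if $f(x)\ge x$ for all $x$. A fundamental domain of a simple $f$ is a segment $[x,f(x)]$ with $x$ in the interior of $S_f$. A fundamental system is a family $\mathcal S$ of triples $(f,S_f,I_f)$ such that each $f$ is a simple positive homeomorphism of $[0,1]$, $S_f$ is its support and $I_f\subset S_f$ is a fundamental domain of $f$, and for any two distinct triples in $\mathcal S$: either $S_f$ and $S_g$ have disjoint interiors, or $S_f\subset I_g$, or $S_g\subset I_f$. *)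

theory Defs
  imports "HOL-Analysis.Analysis" "HOL-Library.FuncSet"
begin

text \<open>Homeomorphisms of [0,1] are represented by functions real => real; only their
values on {0..1} matter.\<close>

definition hom01 :: "(real \<Rightarrow> real) \<Rightarrow> bool" where
  "hom01 f \<longleftrightarrow> (\<exists>g. homeomorphism {0..1} {0..1} f g)"

definition orient_pres_hom01 :: "(real \<Rightarrow> real) \<Rightarrow> bool" where
  "orient_pres_hom01 h \<longleftrightarrow> hom01 h \<and> mono_on {0..1} h"

definition Fix01 :: "(real \<Rightarrow> real) \<Rightarrow> real set" where
  "Fix01 f = {x \<in> {0..1}. f x = x}"

definition simple_hom :: "(real \<Rightarrow> real) \<Rightarrow> bool" where
  "simple_hom f \<longleftrightarrow> hom01 f \<and> (\<exists>C. components ({0..1} - Fix01 f) = {C})"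

definition support01 :: "(real \<Rightarrow> real) \<Rightarrow> real set" where
  "support01 f = closure ({0..1} - Fix01 f)"

definition positive_hom :: "(real \<Rightarrow> real) \<Rightarrow> bool" where
  "positive_hom f \<longleftrightarrow> (\<forall>x\<in>{0..1}. x \<le> f x)"

definition fundamental_domain :: "(real \<Rightarrow> real) \<Rightarrow> real set \<Rightarrow> bool" where
  "fundamental_domain f I \<longleftrightarrow> (\<exists>x \<in> interior (support01 f). I = {x..f x})"

type_synonym triple = "(real \<Rightarrow> real) \<times> real set \<times> real set"

definition fundamental_system :: "triple set \<Rightarrow> bool" where
  "fundamental_system \<S> \<longleftrightarrow>
     (\<forall>(f, S, I) \<in> \<S>. simple_hom f \<and> positive_hom f \<and> S = support01 f
                        \<and> I \<subseteq> S \<and> fundamental_domain f I) \<and>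
     (\<forall>t1 \<in> \<S>. \<forall>t2 \<in> \<S>. t1 \<noteq> t2 \<longrightarrow>
        (let S1 = fst (snd t1); I1 = snd (snd t1); S2 = fst (snd t2); I2 = snd (snd t2) in
          interior S1 \<inter> interior S2 = {} \<or> S1 \<subseteq> I2 \<or> S2 \<subseteq> I1))"

inductive_set gen_group :: "(real \<Rightarrow> real) set \<Rightarrow> (real \<Rightarrow> real) set" for F where
  gen_id: "restrict id {0..1} \<in> gen_group F"
| gen_mul: "f \<in> F \<Longrightarrow> g \<in> gen_group F \<Longrightarrow> restrict (f \<circ> g) {0..1} \<in> gen_group F"
| gen_inv: "f \<in> F \<Longrightarrow> g \<in> gen_group F \<Longrightarrow>
            restrict (inv_into {0..1} f \<circ> g) {0..1} \<in> gen_group F"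

end

theory Submission
  imports Defs
begin

text \<open>A simple positive homeomorphism \<open>f\<close> acts on the interior \<open>(a,b)\<close> of its support like a
  translation: the translates \<open>f\<^sup>n[x, f x)\<close> of a fundamental domain tile \<open>(a,b)\<close>. Hence an
  increasing map from \<open>[x, f x]\<close> onto a fundamental domain \<open>[y, g y]\<close> of another such \<open>g\<close>
  extends uniquely to a conjugacy between \<open>f\<close> and \<open>g\<close> on the supports. Starting from \<open>h\<close>,
  the triples are processed by increasing support length; by the nesting condition every
  shorter support lies outside the interior of the current one or inside its fundamental
  domain, so redefining the map on the current support by the extension of its restriction to
  the fundamental domain conjugates the current generator without disturbing the earlier ones.
  Conjugation by the resulting homeomorphism maps generators to generators, hence the generated
  groups onto each other.\<close>

section \<open>Increasing homeomorphisms of intervals\<close>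

lemma strict_mono_on_image_subinterval:
  fixes g :: "real \<Rightarrow> real"
  assumes mono: "strict_mono_on {p..q} g" and onto: "g ` {p..q} = {r..s}"
    and "p \<le> u" "u \<le> v" "v \<le> q"
  shows "g ` {u..v} = {g u..g v}"
proof
  show "g ` {u..v} \<subseteq> {g u..g v}"
    using assms by (auto intro!: strict_mono_on_leD[OF mono])
next
  show "{g u..g v} \<subseteq> g ` {u..v}"
  proof
    fix t assume t: "t \<in> {g u..g v}"
    have "g u \<in> {r..s}" "g v \<in> {r..s}" using assms by auto
    then obtain z where z: "z \<in> {p..q}" "t = g z" using t onto by (metis atLeastAtMost_iff image_iff order.trans)
    have "\<not> z < u" "\<not> v < z"
      using strict_mono_onD[OF mono, of z u] strict_mono_onD[OF mono, of v z] z t assms by auto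
    then show "t \<in> g ` {u..v}" using z by auto
  qed
qed

lemma strict_mono_on_onto_endpoints:
  fixes g :: "real \<Rightarrow> real"
  assumes mono: "strict_mono_on {p..q} g" and onto: "g ` {p..q} = {r..s}" and "p \<le> q"
  shows "g p = r" "g q = s"
proof -
  have "{g p..g q} = {r..s}"
    using strict_mono_on_image_subinterval[OF mono onto] onto \<open>p \<le> q\<close> by simp
  moreover have "g p \<le> g q" using strict_mono_on_leD[OF mono] \<open>p \<le> q\<close> by auto
  ultimately show "g p = r" "g q = s" by (simp_all add: Icc_eq_Icc)
qed

text \<open>A strictly increasing map of a compact interval onto an interval has no jumps,
  since every value strictly between two attained values is attained.\<close>

lemma strict_mono_on_onto_continuous:
  fixes g :: "real \<Rightarrow> real"
  assumes mono: "strict_mono_on {p..q} g" and onto: "g ` {p..q} = {r..s}" and pq: "p \<le> q"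
  shows "continuous_on {p..q} g"
  unfolding continuous_on_iff
proof (intro ballI allI impI)
  fix z e assume z: "z \<in> {p..q}" and e: "(0::real) < e"
  have ends: "g p = r" "g q = s" using strict_mono_on_onto_endpoints[OF mono onto pq] .
  have "\<exists>d1>0. \<forall>t\<in>{p..q}. z - d1 < t \<longrightarrow> g z - e < g t"
  proof (cases "g z - e < r")
    case True
    then show ?thesis using onto by (intro exI[of _ 1]) force
  next
    case False
    then have "g z - e \<in> g ` {p..q}" using onto z ends strict_mono_on_leD[OF mono, of z q] e by auto
    then obtain u where u: "u \<in> {p..q}" "g u = g z - e" by auto
    have "u < z" using strict_mono_on_less[OF mono u(1) z] u e by simp
    then show ?thesis
      using strict_mono_onD[OF mono u(1)] u by (intro exI[of _ "z - u"]) auto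
  qed
  moreover have "\<exists>d2>0. \<forall>t\<in>{p..q}. t < z + d2 \<longrightarrow> g t < g z + e"
  proof (cases "s < g z + e")
    case True
    then show ?thesis using onto by (intro exI[of _ 1]) force
  next
    case False
    then have "g z + e \<in> g ` {p..q}" using onto z ends strict_mono_on_leD[OF mono, of p z] e by auto
    then obtain u where u: "u \<in> {p..q}" "g u = g z + e" by auto
    have "z < u" using strict_mono_on_less[OF mono z u(1)] u e by simp
    then show ?thesis
      using strict_mono_onD[OF mono _ u(1)] u by (intro exI[of _ "u - z"]) auto
  qed
  ultimately obtain d1 d2 where "d1 > 0" "d2 > 0"
    "\<forall>t\<in>{p..q}. z - d1 < t \<longrightarrow> g z - e < g t" "\<forall>t\<in>{p..q}. t < z + d2 \<longrightarrow> g t < g z + e"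
    by blast
  then show "\<exists>d>0. \<forall>t\<in>{p..q}. dist t z < d \<longrightarrow> dist (g t) (g z) < e"
    by (intro exI[of _ "min d1 d2"]) (auto simp: dist_real_def abs_less_iff)
qed

definition incr_hom01 :: "(real \<Rightarrow> real) \<Rightarrow> bool" where
  "incr_hom01 h \<longleftrightarrow> strict_mono_on {0..1} h \<and> h ` {0..1} = {0..1}"

lemma incr_hom01_less: "incr_hom01 h \<Longrightarrow> u \<in> {0..1} \<Longrightarrow> v \<in> {0..1} \<Longrightarrow> u < v \<Longrightarrow> h u < h v"
  unfolding incr_hom01_def by (blast dest: strict_mono_onD)

lemma incr_hom01_in: "incr_hom01 h \<Longrightarrow> u \<in> {0..1} \<Longrightarrow> h u \<in> {0..1}"
  unfolding incr_hom01_def by auto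

lemma incr_hom01_inj: "incr_hom01 h \<Longrightarrow> inj_on h {0..1}"
  unfolding incr_hom01_def by (simp add: strict_mono_on_imp_inj_on)

lemma incr_hom01_image_interval:
  "incr_hom01 h \<Longrightarrow> 0 \<le> u \<Longrightarrow> u \<le> v \<Longrightarrow> v \<le> 1 \<Longrightarrow> h ` {u..v} = {h u..h v}"
  unfolding incr_hom01_def using strict_mono_on_image_subinterval[of 0 1 h 0 1 u v] by simp

lemma incr_hom01_inv_into:
  assumes "incr_hom01 h" "z \<in> {0..1}"
  shows "inv_into {0..1} h z \<in> {0..1}" "h (inv_into {0..1} h z) = z"
proof -
  have "z \<in> h ` {0..1}" using assms unfolding incr_hom01_def by simp
  then show "inv_into {0..1} h z \<in> {0..1}" "h (inv_into {0..1} h z) = z"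
    by (rule inv_into_into, rule f_inv_into_f)
qed

lemma incr_hom01_imp_hom01:
  assumes "incr_hom01 h"
  shows "hom01 h"
proof -
  have "continuous_on {0..1} h"
    using assms strict_mono_on_onto_continuous[of 0 1 h 0 1] unfolding incr_hom01_def by simp
  then show ?thesis
    using assms homeomorphism_compact[of "{0..1}" h "{0..1}"] incr_hom01_inj
    unfolding hom01_def incr_hom01_def by auto
qed

lemma hom01_continuous_bij:
  assumes "hom01 f"
  shows "continuous_on {0..1} f" "f ` {0..1} = {0..1}" "inj_on f {0..1}"
proof -
  obtain g where g: "homeomorphism {0..1} {0..1} f g" using assms unfolding hom01_def by blast
  show "continuous_on {0..1} f" "f ` {0..1} = {0..1}"
    using homeomorphism_cont1[OF g] homeomorphism_image1[OF g] .
  show "inj_on f {0..1}" using homeomorphism_apply1[OF g] by (metis inj_onI)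
qed

lemma orient_pres_hom01_incr: "orient_pres_hom01 h \<Longrightarrow> incr_hom01 h"
  unfolding orient_pres_hom01_def incr_hom01_def
  using hom01_continuous_bij mono_imp_strict_mono by blast

text \<open>A homeomorphism of [0,1] moving no point down fixes 1, so by the intermediate value
  theorem it cannot reverse the order.\<close>

lemma positive_hom01_incr:
  assumes hom: "hom01 f" and pos: "positive_hom f"
  shows "incr_hom01 f"
proof -
  note cont = hom01_continuous_bij(1)[OF hom] and onto = hom01_continuous_bij(2)[OF hom]
    and inj = hom01_continuous_bij(3)[OF hom]
  have "f 1 \<in> {0..1}" "f 0 \<in> {0..1}" "1 \<le> f 1" using onto pos unfolding positive_hom_def by auto
  then have f1: "f 1 = 1" by simp
  have f01: "f 0 < f 1" using inj_onD[OF inj, of 0 1] \<open>f 0 \<in> {0..1}\<close> f1 by fastforce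
  have "f u < f v" if "0 \<le> u" "u < v" "v \<le> 1" for u v
  proof -
    have between: "f 0 < f w \<and> f w < f 1" if "0 < w" "w < 1" for w
      using continuous_inj_imp_mono[OF that cont inj] f01 by auto
    show ?thesis
    proof (cases "u = 0 \<or> v = 1")
      case True
      then show ?thesis using between[of u] between[of v] f01 that by (cases "u = 0"; cases "v = 1") auto
    next
      case False
      then have "0 < u" "v < 1" using that by auto
      have "continuous_on {0..v} f" "inj_on f {0..v}"
        using continuous_on_subset[OF cont] inj_on_subset[OF inj] \<open>v < 1\<close> by auto
      then have "(f 0 < f u \<and> f u < f v) \<or> (f v < f u \<and> f u < f 0)"
        using continuous_inj_imp_mono[of 0 u v f] \<open>0 < u\<close> \<open>u < v\<close> by auto
      then show ?thesis using between[of v] \<open>0 < u\<close> \<open>u < v\<close> \<open>v < 1\<close> by auto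
    qed
  qed
  then show ?thesis unfolding incr_hom01_def using onto by (auto intro: strict_mono_onI)
qed

section \<open>Interval shifts and their fundamental domains\<close>

text \<open>The restriction of a simple positive homeomorphism to its support \<open>[a,b]\<close>.\<close>

locale interval_shift =
  fixes f :: "real \<Rightarrow> real" and a b :: real
  assumes less: "a < b" and mono: "strict_mono_on {a..b} f" and onto: "f ` {a..b} = {a..b}"
    and moves_up: "\<And>z. a < z \<Longrightarrow> z < b \<Longrightarrow> z < f z"
begin

definition finv :: "real \<Rightarrow> real" where
  "finv = inv_into {a..b} f"

lemma f_in: "z \<in> {a..b} \<Longrightarrow> f z \<in> {a..b}"
  using onto by auto

lemma finv_in: "z \<in> {a..b} \<Longrightarrow> finv z \<in> {a..b}"
  unfolding finv_def by (metis inv_into_into onto)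

lemma f_finv: "z \<in> {a..b} \<Longrightarrow> f (finv z) = z"
  unfolding finv_def by (metis f_inv_into_f onto)

lemma finv_f: "z \<in> {a..b} \<Longrightarrow> finv (f z) = z"
  unfolding finv_def using strict_mono_on_imp_inj_on[OF mono] by (simp add: inv_into_f_f)

lemma finv_mono: "strict_mono_on {a..b} finv"
proof (rule strict_mono_onI)
  fix r s assume "r \<in> {a..b}" "s \<in> {a..b}" "r < s"
  then show "finv r < finv s"
    using strict_mono_on_leD[OF mono, of "finv s" "finv r"] finv_in f_finv by force
qed

lemma fixes_ends: "f a = a" "f b = b"
  using strict_mono_on_onto_endpoints[OF mono onto] less by auto

definition iter :: "int \<Rightarrow> real \<Rightarrow> real" where
  "iter n = (if 0 \<le> n then f ^^ nat n else finv ^^ nat (- n))"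

lemma iter_in: "z \<in> {a..b} \<Longrightarrow> iter n z \<in> {a..b}"
proof -
  have "(f ^^ k) z \<in> {a..b}" "(finv ^^ k) z \<in> {a..b}" if "z \<in> {a..b}" for k z
    using that by (induction k) (simp_all add: f_in finv_in del: atLeastAtMost_iff)
  then show "z \<in> {a..b} \<Longrightarrow> iter n z \<in> {a..b}" unfolding iter_def by simp
qed

lemma iter_0 [simp]: "iter 0 z = z"
  unfolding iter_def by simp

lemma iter_succ: assumes "z \<in> {a..b}" shows "iter (n + 1) z = f (iter n z)"
proof (cases "0 \<le> n")
  case True
  then have "nat (n + 1) = Suc (nat n)" by simp
  then show ?thesis using True unfolding iter_def by simp
next
  case False
  then have "nat (- n) = Suc (nat (- (n + 1)))" by simp
  then have "iter n z = finv (iter (n + 1) z)"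
    using False unfolding iter_def by (cases "n + 1 = 0") auto
  then show ?thesis using f_finv iter_in assms by simp
qed

lemma iter_pred: "z \<in> {a..b} \<Longrightarrow> iter (n - 1) z = finv (iter n z)"
  using iter_succ[of z "n - 1"] finv_f iter_in by simp

lemma iter_1: "z \<in> {a..b} \<Longrightarrow> iter 1 z = f z"
  using iter_succ[of z 0] by simp

lemma iter_add: "z \<in> {a..b} \<Longrightarrow> iter (m + n) z = iter m (iter n z)"
proof (induction m rule: int_induct[where k = 0])
  case (step1 i)
  then show ?case using iter_succ[of z "i + n"] iter_succ[of "iter n z" i] iter_in
    by (simp add: algebra_simps)
next
  case (step2 i)
  then show ?case using iter_pred[of z "i + n"] iter_pred[of "iter n z" i] iter_in
    by (simp add: algebra_simps)
qed simp

lemma iter_mono: "strict_mono_on {a..b} (iter n)"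
proof (induction n rule: int_induct[where k = 0])
  case (step1 i)
  then show ?case
    by (intro strict_mono_onI) (metis iter_succ iter_in strict_mono_onD[OF mono] strict_mono_onD)
next
  case (step2 i)
  then show ?case
    by (intro strict_mono_onI) (metis iter_pred iter_in strict_mono_onD[OF finv_mono] strict_mono_onD)
qed (simp add: strict_mono_onI)

lemma iter_fixes_ends: "iter n a = a" "iter n b = b"
proof (induction n rule: int_induct[where k = 0])
  case (step1 i)
  case 1 show ?case using iter_succ[of a i] step1 fixes_ends less by simp
  case 2 show ?case using iter_succ[of b i] step1 fixes_ends less by simp
next
  case (step2 i)
  case 1 show ?case using iter_pred[of a i] step2 finv_f[of a] fixes_ends less by simp
  case 2 show ?case using iter_pred[of b i] step2 finv_f[of b] fixes_ends less by simp
qed simp_all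

lemma iter_interior: "a < z \<Longrightarrow> z < b \<Longrightarrow> a < iter n z \<and> iter n z < b"
  using strict_mono_onD[OF iter_mono, of a z n] strict_mono_onD[OF iter_mono, of z b n]
    iter_fixes_ends less by auto

lemma f_interior: "a < z \<Longrightarrow> z < b \<Longrightarrow> z < f z \<and> f z < b"
  using moves_up iter_interior[of z 1] iter_1[of z] by auto

lemma orbit_less_iff:
  assumes "a < x" "x < b"
  shows "iter n x < iter m x \<longleftrightarrow> n < m"
proof -
  have step: "iter n x < iter (n + 1) x" for n
    using iter_succ[of x n] moves_up iter_interior assms by auto
  have mono_step: "iter n x < iter (n + int (Suc k)) x" for n k
  proof (induction k)
    case (Suc k)
    then show ?case using step[of "n + int (Suc k)"] by (simp add: add.assoc)
  qed (use step in simp)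
  have "iter n x < iter m x" if "n < m" for n m
  proof -
    from that have "m = n + int (Suc (nat (m - n - 1)))" by simp
    then show ?thesis using mono_step by metis
  qed
  then show ?thesis by (metis less_asym' linorder_neqE)
qed

lemma orbit_le_iff: "a < x \<Longrightarrow> x < b \<Longrightarrow> iter n x \<le> iter m x \<longleftrightarrow> n \<le> m"
  using orbit_less_iff[of x m n] by (simp add: not_less[symmetric])


text \<open>If the forward orbit of \<open>x\<close> were bounded inside \<open>(a,b)\<close>, its supremum \<open>L\<close> would
  satisfy \<open>L < f L\<close>; but some iterate exceeds \<open>finv L\<close>, so the next one exceeds \<open>L\<close>.\<close>

lemma orbit_exceeds:
  assumes x: "a < x" "x < b" and z: "z < b"
  shows "\<exists>n. z < iter n x"
proof (rule ccontr)
  assume "\<not> ?thesis"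
  then have below: "\<And>n. iter n x \<le> z" by (simp add: not_less)
  define L where "L = Sup (range (\<lambda>n::nat. iter (int n) x))"
  have bdd: "bdd_above (range (\<lambda>n::nat. iter (int n) x))"
    using below by (intro bdd_aboveI[of _ z]) auto
  have upper: "\<And>n::nat. iter (int n) x \<le> L" unfolding L_def using bdd by (auto intro: cSup_upper)
  have "x \<le> L" using upper[of 0] by simp
  moreover have "L \<le> z" unfolding L_def using below by (auto intro: cSup_least)
  ultimately have L: "L \<in> {a..b}" "L < f L" using moves_up[of L] x z by auto
  have "finv L < L"
    using strict_mono_onD[OF finv_mono, of L "f L"] L finv_f f_in by auto
  then obtain n :: nat where n: "finv L < iter (int n) x"
    unfolding L_def using less_cSup_iff[OF _ bdd] by auto
  have xin: "x \<in> {a..b}" using x by auto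
  have "L < f (iter (int n) x)"
    using strict_mono_onD[OF mono finv_in[OF L(1)] iter_in[OF xin] n] f_finv[OF L(1)] by simp
  also have "\<dots> = iter (int (Suc n)) x" using iter_succ[OF xin, of "int n"] by (simp add: add.commute)
  also have "\<dots> \<le> L" by (rule upper)
  finally show False by simp
qed

lemma orbit_falls_below:
  assumes x: "a < x" "x < b" and z: "a < z"
  shows "\<exists>n. iter n x \<le> z"
proof (rule ccontr)
  assume "\<not> ?thesis"
  then have above: "\<And>n. z < iter n x" by (simp add: not_le)
  define L where "L = Inf (range (\<lambda>n::nat. iter (- int n) x))"
  have bdd: "bdd_below (range (\<lambda>n::nat. iter (- int n) x))"
    using above by (intro bdd_belowI[of _ z]) (auto intro: less_imp_le)
  have lower: "\<And>n::nat. L \<le> iter (- int n) x" unfolding L_def using bdd by (auto intro: cInf_lower)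
  have "z \<le> L" unfolding L_def using above by (auto intro: cInf_greatest less_imp_le)
  moreover have "L \<le> x" using lower[of 0] by simp
  ultimately have L: "L \<in> {a..b}" "L < f L" using moves_up[of L] x z by auto
  then obtain n :: nat where n: "iter (- int n) x < f L"
    using cInf_less_iff[OF _ bdd, of "f L"] unfolding L_def[symmetric] by auto
  have xin: "x \<in> {a..b}" using x by auto
  have "- int (Suc n) = - int n - 1" by simp
  then have "iter (- int (Suc n)) x = finv (iter (- int n) x)"
    using iter_pred[OF xin, of "- int n"] by metis
  also have "\<dots> < L"
    using strict_mono_onD[OF finv_mono iter_in[OF xin] f_in[OF L(1)] n] finv_f[OF L(1)] by simp
  finally show False using lower[of "Suc n"] by simp
qed

text \<open>The translates \<open>[iter n x, iter (n + 1) x)\<close> of a fundamental domain tile \<open>(a,b)\<close>;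
  \<open>level x z\<close> is the index of the tile containing \<open>z\<close>.\<close>

lemma tile_exists:
  assumes x: "a < x" "x < b" and z: "a < z" "z < b"
  shows "\<exists>n. iter n x \<le> z \<and> z < iter (n + 1) x"
proof -
  obtain m where m: "iter m x \<le> z" using orbit_falls_below[OF x z(1)] by blast
  obtain m' where m': "z < iter m' x" using orbit_exceeds[OF x z(2)] by blast
  have "z < iter (m + int k) x \<longrightarrow> (\<exists>n. iter n x \<le> z \<and> z < iter (n + 1) x)" for k
  proof (induction k)
    case (Suc k)
    then show ?case
      by (cases "z < iter (m + int k) x") (auto intro!: exI[of _ "m + int k"] simp: ac_simps not_less)
  qed (use m in simp)
  moreover have "m < m'" using m m' orbit_le_iff[OF x, of m' m] by fastforce
  ultimately show ?thesis using m' by (metis add_diff_cancel_left' order_less_imp_le zle_iff_zadd)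
qed

definition level :: "real \<Rightarrow> real \<Rightarrow> int" where
  "level x z = (THE n. iter n x \<le> z \<and> z < iter (n + 1) x)"

lemma level_eq:
  assumes x: "a < x" "x < b" and n: "iter n x \<le> z" "z < iter (n + 1) x"
  shows "level x z = n"
  unfolding level_def
proof (rule the_equality)
  fix m assume m: "iter m x \<le> z \<and> z < iter (m + 1) x"
  have "n < m + 1" "m < n + 1" using n m orbit_less_iff[OF x] by (meson le_less_trans)+
  then show "m = n" by simp
qed (use n in simp)

lemma level_bounds:
  assumes "a < x" "x < b" "a < z" "z < b"
  shows "iter (level x z) x \<le> z" "z < iter (level x z + 1) x"
  using tile_exists[OF assms] level_eq[OF assms(1,2)] by metis+

lemma iter_tile_to_domain:
  assumes x: "a < x" "x < b" and n: "iter n x \<le> z" "z < iter (n + 1) x"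
  shows "x \<le> iter (- n) z" "iter (- n) z < f x"
proof -
  have xin: "x \<in> {a..b}" using x by auto
  have zin: "z \<in> {a..b}" using n iter_in[OF xin, of n] iter_in[OF xin, of "n + 1"] by auto
  have "iter (- n) (iter n x) = x" "iter (- n) (iter (n + 1) x) = f x"
    using iter_add[OF xin, of "- n" n] iter_add[OF xin, of "- n" "n + 1"] iter_1[OF xin] by simp_all
  then show "x \<le> iter (- n) z" "iter (- n) z < f x"
    using strict_mono_on_leD[OF iter_mono iter_in[OF xin] zin n(1)]
      strict_mono_onD[OF iter_mono zin iter_in[OF xin] n(2)] by metis+
qed

end

section \<open>Conjugating interval shifts\<close>

locale shift_conjugation = F: interval_shift f a b + G: interval_shift g c d for f a b g c d +
  fixes x y :: real and k :: "real \<Rightarrow> real"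
  assumes x: "a < x" "x < b" and y: "c < y" "y < d"
    and k_mono: "strict_mono_on {x..f x} k" and k_onto: "k ` {x..f x} = {y..g y}"
begin

definition extension :: "real \<Rightarrow> real" where
  "extension z = (if z \<le> a then c else if b \<le> z then d
     else G.iter (F.level x z) (k (F.iter (- F.level x z) z)))"

lemma x_in: "x \<in> {a..b}" and y_in: "y \<in> {c..d}"
  using x y by auto

lemma k_ends: "k x = y" "k (f x) = g y"
  using strict_mono_on_onto_endpoints[OF k_mono k_onto] F.f_interior[OF x] by auto

lemma extension_ends: "extension a = c" "extension b = d"
  unfolding extension_def using F.less by auto

lemma extension_on_tile:
  assumes z: "a < z" "z < b" and n: "F.iter n x \<le> z" "z < F.iter (n + 1) x"
  shows "extension z = G.iter n (k (F.iter (- n) z))"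
    and "y \<le> k (F.iter (- n) z)" "k (F.iter (- n) z) < g y"
    and "G.iter n y \<le> extension z" "extension z < G.iter (n + 1) y"
proof -
  show eq: "extension z = G.iter n (k (F.iter (- n) z))"
    unfolding extension_def using z F.level_eq[OF x n] by simp
  define w where "w = F.iter (- n) z"
  have w: "x \<le> w" "w < f x" using F.iter_tile_to_domain[OF x n] unfolding w_def by auto
  show kw: "y \<le> k (F.iter (- n) z)" "k (F.iter (- n) z) < g y"
    using strict_mono_on_leD[OF k_mono, of x w] strict_mono_onD[OF k_mono, of w "f x"]
      w k_ends F.f_interior[OF x] unfolding w_def by auto
  have kw_in: "k w \<in> {c..d}" "g y \<in> {c..d}"
    using kw G.f_interior[OF y] y unfolding w_def by auto
  have "G.iter (n + 1) y = G.iter n (g y)"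
    using G.iter_add[OF y_in, of n 1] G.iter_1[OF y_in] by simp
  then show "G.iter n y \<le> extension z" "extension z < G.iter (n + 1) y"
    using strict_mono_on_leD[OF G.iter_mono y_in kw_in(1)] strict_mono_onD[OF G.iter_mono kw_in]
      kw eq unfolding w_def by auto
qed

lemma extension_interior:
  assumes "a < z" "z < b"
  shows "c < extension z" "extension z < d"
  using extension_on_tile(4,5)[OF assms F.level_bounds[OF x assms]]
    G.iter_interior[OF y, of "F.level x z"] G.iter_interior[OF y, of "F.level x z + 1"] by linarith+

lemma extension_mono: "strict_mono_on {a..b} extension"
proof (rule strict_mono_onI)
  fix z w assume "z \<in> {a..b}" "w \<in> {a..b}" and zw: "z < w"
  show "extension z < extension w"
  proof (cases "z = a \<or> w = b")
    case True
    then show ?thesis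
      using extension_ends extension_interior[of z] extension_interior[of w] zw \<open>z \<in> {a..b}\<close>
        \<open>w \<in> {a..b}\<close> G.less by (cases "z = a"; cases "w = b") auto
  next
    case False
    then have z: "a < z" "z < b" and w: "a < w" "w < b" using \<open>z \<in> {a..b}\<close> \<open>w \<in> {a..b}\<close> zw by auto
    define n m where "n = F.level x z" and "m = F.level x w"
    note nt = F.level_bounds[OF x z, folded n_def] and mt = F.level_bounds[OF x w, folded m_def]
    have "n < m + 1" using F.orbit_less_iff[OF x, of n "m + 1"] nt mt zw by auto
    then consider "n = m" | "n + 1 \<le> m" by linarith
    then show ?thesis
    proof cases
      case 1
      have "F.iter (- n) z < F.iter (- n) w"
        using strict_mono_onD[OF F.iter_mono _ _ zw] z w by auto
      moreover have "F.iter (- n) z \<in> {x..f x}" "F.iter (- n) w \<in> {x..f x}"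
        using F.iter_tile_to_domain[OF x nt] F.iter_tile_to_domain[OF x mt] 1 by auto
      ultimately have "k (F.iter (- n) z) < k (F.iter (- n) w)"
        using strict_mono_onD[OF k_mono] by blast
      moreover have "k (F.iter (- n) z) \<in> {c..d}" "k (F.iter (- n) w) \<in> {c..d}"
        using extension_on_tile(2,3)[OF z nt] extension_on_tile(2,3)[OF w mt] 1
          G.f_interior[OF y] y by fastforce+
      ultimately show ?thesis
        using strict_mono_onD[OF G.iter_mono] extension_on_tile(1)[OF z nt]
          extension_on_tile(1)[OF w mt] 1 by auto
    next
      case 2
      then have "G.iter (n + 1) y \<le> G.iter m y" using G.orbit_le_iff[OF y] by simp
      then show ?thesis using extension_on_tile(5)[OF z nt] extension_on_tile(4)[OF w mt] by linarith
    qed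
  qed
qed

lemma extension_onto: "extension ` {a..b} = {c..d}"
proof
  show "extension ` {a..b} \<subseteq> {c..d}"
    using extension_ends extension_interior G.less
    by (force simp: less_imp_le order.order_iff_strict)
next
  show "{c..d} \<subseteq> extension ` {a..b}"
  proof
    fix t assume t: "t \<in> {c..d}"
    show "t \<in> extension ` {a..b}"
    proof (cases "c < t \<and> t < d")
      case False
      then have "t = extension a \<or> t = extension b" using t extension_ends by auto
      moreover have "a \<in> {a..b}" "b \<in> {a..b}" using F.less by auto
      ultimately show ?thesis by blast
    next
      case True
      define m where "m = G.level y t"
      note mt = G.level_bounds[OF y True[THEN conjunct1] True[THEN conjunct2], folded m_def]
      have "y \<le> G.iter (- m) t" "G.iter (- m) t < g y" using G.iter_tile_to_domain[OF y mt] by auto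
      then obtain u where u: "u \<in> {x..f x}" "k u = G.iter (- m) t"
        using k_onto by (metis atLeastAtMost_iff image_iff less_imp_le)
      have "u < f x" using u k_ends \<open>G.iter (- m) t < g y\<close> by (cases "u = f x") auto
      have u_in: "u \<in> {a..b}" "f x \<in> {a..b}" using u x F.f_interior[OF x] by auto
      define z where "z = F.iter m u"
      have "F.iter m x \<le> z" "z < F.iter m (f x)"
        using strict_mono_on_leD[OF F.iter_mono x_in u_in(1)] strict_mono_onD[OF F.iter_mono u_in \<open>u < f x\<close>]
          u unfolding z_def by auto
      moreover have "F.iter m (f x) = F.iter (m + 1) x"
        using F.iter_add[OF x_in, of m 1] F.iter_1[OF x_in] by simp
      moreover have z: "a < z" "z < b" using F.iter_interior[of u m] u x F.f_interior[OF x] unfolding z_def by auto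
      ultimately have "extension z = G.iter m (k (F.iter (- m) z))" using extension_on_tile(1) by auto
      also have "F.iter (- m) z = u" unfolding z_def using F.iter_add[OF u_in(1), of "- m" m] by simp
      also have "G.iter m (k u) = t" using u G.iter_add[of t m "- m"] t by simp
      finally show ?thesis using z by (auto intro!: image_eqI)
    qed
  qed
qed

lemma extension_extends: "z \<in> {x..f x} \<Longrightarrow> extension z = k z"
proof (cases "z = f x")
  case True
  have "F.iter 1 x \<le> z" "z < F.iter (1 + 1) x"
    using True F.iter_1[OF x_in] F.orbit_less_iff[OF x, of 1 2] by auto
  moreover have "F.iter (- 1) (f x) = x" using F.iter_add[OF x_in, of "- 1" 1] F.iter_1[OF x_in] by simp
  ultimately have "extension z = G.iter 1 (k x)"
    using extension_on_tile(1)[of z 1] True x F.f_interior[OF x] by auto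
  then show ?thesis using True k_ends G.iter_1[OF y_in] by simp
next
  case False
  assume "z \<in> {x..f x}"
  then have "F.iter 0 x \<le> z" "z < F.iter (0 + 1) x" using False F.iter_1[OF x_in] by auto
  then show ?thesis using extension_on_tile(1)[of z 0] \<open>z \<in> {x..f x}\<close> x F.f_interior[OF x] by auto
qed

lemma extension_conj: "z \<in> {a..b} \<Longrightarrow> extension (f z) = g (extension z)"
proof (cases "z = a \<or> z = b")
  case True
  then show ?thesis using extension_ends F.fixes_ends G.fixes_ends by auto
next
  case False
  assume z_in: "z \<in> {a..b}"
  then have z: "a < z" "z < b" using False by auto
  define n where "n = F.level x z"
  note nt = F.level_bounds[OF x z, folded n_def]
  have fz: "a < f z" "f z < b" using F.f_interior[OF z] z by auto
  have "F.iter (n + 1) x \<le> f z" "f z < F.iter (n + 1 + 1) x"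
    using strict_mono_on_leD[OF F.mono F.iter_in[OF x_in] z_in nt(1)]
      strict_mono_onD[OF F.mono z_in F.iter_in[OF x_in] nt(2)]
      F.iter_succ[OF x_in, of n] F.iter_succ[OF x_in, of "n + 1"] by auto
  note tile = extension_on_tile[OF fz this]
  have "F.iter (- (n + 1)) (f z) = F.iter (- n) z"
    using F.iter_add[OF z_in, of "- (n + 1)" 1] F.iter_1[OF z_in] by simp
  moreover have "k (F.iter (- n) z) \<in> {c..d}"
    using tile(2,3) G.f_interior[OF y] y calculation by fastforce
  ultimately show ?thesis
    using tile(1) extension_on_tile(1)[OF z nt] G.iter_succ by simp
qed

end

lemma incr_hom01_patch:
  assumes h: "incr_hom01 h" and ab: "0 \<le> a" "a \<le> b" "b \<le> 1"
    and K: "strict_mono_on {a..b} K" "K ` {a..b} = h ` {a..b}"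
  shows "incr_hom01 (\<lambda>z. if z \<in> {a..b} then K z else h z)" (is "incr_hom01 ?H")
proof -
  have K_onto: "K ` {a..b} = {h a..h b}" using K(2) incr_hom01_image_interval[OF h ab] by simp
  have K_in: "h a \<le> K z \<and> K z \<le> h b" if "z \<in> {a..b}" for z using K_onto that by auto
  have "?H z < ?H w" if z: "z \<in> {0..1}" and w: "w \<in> {0..1}" and "z < w" for z w
  proof (cases "z \<in> {a..b}"; cases "w \<in> {a..b}")
    assume "z \<in> {a..b}" "w \<in> {a..b}"
    then show ?thesis using strict_mono_onD[OF K(1)] \<open>z < w\<close> by simp
  next
    assume "z \<in> {a..b}" "w \<notin> {a..b}"
    then show ?thesis using K_in[of z] incr_hom01_less[OF h, of b w] ab w \<open>z < w\<close> by auto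
  next
    assume "z \<notin> {a..b}" "w \<in> {a..b}"
    then show ?thesis using K_in[of w] incr_hom01_less[OF h, of z a] ab z \<open>z < w\<close> by auto
  next
    assume "z \<notin> {a..b}" "w \<notin> {a..b}"
    then show ?thesis using incr_hom01_less[OF h z w \<open>z < w\<close>] by (simp only: if_False)
  qed
  moreover have "?H ` {0..1} = {0..1}"
  proof
    have "K ` {a..b} \<subseteq> h ` {0..1}" using K(2) ab by auto
    then show "?H ` {0..1} \<subseteq> {0..1}" using h unfolding incr_hom01_def by auto
    show "{0..1} \<subseteq> ?H ` {0..1}"
    proof
      fix t :: real assume "t \<in> {0..1}"
      then obtain z where z: "z \<in> {0..1}" "t = h z" using h unfolding incr_hom01_def by blast
      show "t \<in> ?H ` {0..1}"
      proof (cases "z \<in> {a..b}")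
        case True
        then obtain w where "w \<in> {a..b}" "t = K w" using z K(2) by (metis image_eqI imageE)
        then show ?thesis using ab by (intro image_eqI[of _ _ w]) auto
      qed (use z in auto)
    qed
  qed
  ultimately show ?thesis unfolding incr_hom01_def by (auto intro: strict_mono_onI)
qed

lemma interval_shift_conjugating_patch:
  assumes ht': "incr_hom01 ht'" and f: "interval_shift f a b" and g: "interval_shift g (ht' a) (ht' b)"
    and ab: "0 \<le> a" "b \<le> 1" and x: "a < x" "x < b" and gx: "g (ht' x) = ht' (f x)"
  obtains ht where "incr_hom01 ht" "\<And>z. z \<notin> {a<..<b} \<Longrightarrow> ht z = ht' z"
    "\<And>z. z \<in> {x..f x} \<Longrightarrow> ht z = ht' z" "ht ` {a..b} = ht' ` {a..b}"
    "\<And>z. z \<in> {a..b} \<Longrightarrow> ht (f z) = g (ht z)"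
proof -
  have fx: "x < f x" "f x < b" using interval_shift.f_interior[OF f x] by auto
  have mono: "strict_mono_on {x..f x} ht'"
    using ht' ab x fx unfolding incr_hom01_def by (auto intro: monotone_on_subset)
  have "ht' ` {x..f x} = {ht' x..g (ht' x)}"
    using incr_hom01_image_interval[OF ht'] ab x fx gx by simp
  moreover have "ht' a < ht' x" "ht' x < ht' b" using incr_hom01_less[OF ht'] ab x by auto
  ultimately interpret E: shift_conjugation f a b g "ht' a" "ht' b" x "ht' x" ht'
    using x mono by (intro shift_conjugation.intro shift_conjugation_axioms.intro f g) auto
  define ht where "ht z = (if z \<in> {a..b} then E.extension z else ht' z)" for z
  have onto: "E.extension ` {a..b} = ht' ` {a..b}"
    using E.extension_onto incr_hom01_image_interval[OF ht'] ab x by simp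
  show ?thesis
  proof
    show "incr_hom01 ht"
      unfolding ht_def using incr_hom01_patch[OF ht' ab(1) _ ab(2) E.extension_mono onto] x by simp
    show "ht z = ht' z" if "z \<notin> {a<..<b}" for z
      using that E.extension_ends unfolding ht_def by auto
    show "ht z = ht' z" if "z \<in> {x..f x}" for z
      using that E.extension_extends x fx unfolding ht_def by auto
    show "ht ` {a..b} = ht' ` {a..b}" using onto unfolding ht_def by simp
    show "ht (f z) = g (ht z)" if "z \<in> {a..b}" for z
      using that E.extension_conj interval_shift.f_in[OF f] unfolding ht_def by simp
  qed
qed

lemma conjugate_off_support:
  assumes ht: "incr_hom01 ht" and S: "S \<subseteq> {0..1}" and img: "ht ` S = T"
    and f: "\<And>z. z \<in> {0..1} - S \<Longrightarrow> f z = z" and g: "\<And>z. z \<in> {0..1} - T \<Longrightarrow> g z = z"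
    and on_S: "\<And>z. z \<in> S \<Longrightarrow> ht (f z) = g (ht z)" and z: "z \<in> {0..1}"
  shows "ht (f z) = g (ht z)"
proof (cases "z \<in> S")
  case False
  have "ht z \<notin> T"
  proof
    assume "ht z \<in> T"
    then obtain w where "w \<in> S" "ht z = ht w" using img by auto
    then have "z = w" using inj_onD[OF incr_hom01_inj[OF ht]] z S by auto
    then show False using False \<open>w \<in> S\<close> by simp
  qed
  then show ?thesis using f[of z] g[of "ht z"] False z incr_hom01_in[OF ht z] by simp
qed (rule on_S)

section \<open>Fundamental systems\<close>

lemma open_interval_real_eq_Ioo:
  fixes U :: "real set"
  assumes "open U" "is_interval U" "U \<noteq> {}" "bounded U"
  shows "Inf U < Sup U" "U = {Inf U<..<Sup U}"
proof -
  have bdd: "bdd_below U" "bdd_above U"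
    using \<open>bounded U\<close> by (simp_all add: bounded_imp_bdd_below bounded_imp_bdd_above)
  have inside: "Inf U < z \<and> z < Sup U" if "z \<in> U" for z
  proof -
    obtain e where e: "e > 0" "ball z e \<subseteq> U" using \<open>open U\<close> \<open>z \<in> U\<close> open_contains_ball by blast
    have "dist z (z - e/2) < e" "dist z (z + e/2) < e" using e(1) by (simp_all add: dist_real_def)
    then have "z - e/2 \<in> U" "z + e/2 \<in> U" using e(2) by (auto simp del: dist_real_def)
    then have "Inf U \<le> z - e/2" "z + e/2 \<le> Sup U"
      using cInf_lower[OF _ bdd(1)] cSup_upper[OF _ bdd(2)] by blast+
    then show ?thesis using e(1) by linarith
  qed
  have between: "z \<in> U" if z: "Inf U < z" "z < Sup U" for z
  proof -
    obtain u v where "u \<in> U" "u < z" "v \<in> U" "z < v"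
      using cInf_less_iff[OF \<open>U \<noteq> {}\<close> bdd(1), of z] less_cSup_iff[OF \<open>U \<noteq> {}\<close> bdd(2), of z] z
      by blast
    then show ?thesis using \<open>is_interval U\<close> unfolding is_interval_1 by (meson less_imp_le)
  qed
  show "U = {Inf U<..<Sup U}"
    using inside between by (simp add: set_eq_iff) (meson greaterThanLessThan_iff)
  obtain z where "z \<in> U" using \<open>U \<noteq> {}\<close> by blast
  then show "Inf U < Sup U" using inside[of z] by linarith
qed

text \<open>The set of points moved by a simple homeomorphism is one component of an open subset of
  \<open>(0,1)\<close>, hence an open interval; its closure is the support.\<close>

lemma simple_positive_support:
  assumes simple: "simple_hom f" and pos: "positive_hom f"
  obtains a b where "0 \<le> a" "a < b" "b \<le> 1" "support01 f = {a..b}"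
    "\<And>z. a < z \<Longrightarrow> z < b \<Longrightarrow> z < f z" "\<And>z. z \<in> {0..1} - {a<..<b} \<Longrightarrow> f z = z"
proof -
  have hom: "hom01 f" using simple unfolding simple_hom_def by simp
  have incr: "incr_hom01 f" using positive_hom01_incr[OF hom pos] .
  have ends: "f 0 = 0" "f 1 = 1"
    using strict_mono_on_onto_endpoints[of 0 1 f 0 1] incr unfolding incr_hom01_def by simp_all
  define U where "U = {0..1} - Fix01 f"
  have U_iff: "z \<in> U \<longleftrightarrow> z \<in> {0..1} \<and> f z \<noteq> z" for z
    unfolding U_def Fix01_def by auto
  have U: "U = {0<..<1} \<inter> (\<lambda>z. f z - z) -` (- {0})"
    using ends unfolding U_def Fix01_def by (auto simp: less_eq_real_def)
  have "continuous_on {0<..<1} f"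
    using hom01_continuous_bij(1)[OF hom] by (rule continuous_on_subset) (simp add: subset_eq)
  then have "continuous_on {0<..<1} (\<lambda>z. f z - z)" by (intro continuous_intros)
  then have "open U" unfolding U by (rule continuous_open_preimage) auto
  obtain C where "components U = {C}" using simple unfolding simple_hom_def U_def by blast
  then have "connected U" "U \<noteq> {}"
    using Union_components[of U] in_components_connected[of C U] in_components_nonempty[of C U] by auto
  moreover have sub: "U \<subseteq> {0<..<1}" unfolding U by blast
  then have "bounded U" by (rule bounded_subset[OF bounded_Ioo])
  ultimately obtain a b where ab: "a < b" "U = {a<..<b}"
    using open_interval_real_eq_Ioo[OF \<open>open U\<close> _ \<open>U \<noteq> {}\<close>] is_interval_connected_1 by blast
  have "0 \<le> a" "b \<le> 1"
    using ab sub greaterThanLessThan_subseteq_greaterThanLessThan[of a b 0 1] by auto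
  moreover have "support01 f = {a..b}" unfolding support01_def U_def[symmetric] using ab by simp
  moreover have "z < f z" if "a < z" "z < b" for z
    using that pos U_iff[of z] ab(2) unfolding positive_hom_def by (auto simp: less_le)
  moreover have "f z = z" if "z \<in> {0..1} - {a<..<b}" for z
    using that U_iff[of z] ab(2) by auto
  ultimately show ?thesis using ab(1) that by blast
qed

lemma fundamental_system_member:
  assumes "fundamental_system \<S>" "(f, S, I) \<in> \<S>"
  shows "simple_hom f" "positive_hom f" "S = support01 f" "fundamental_domain f I"
proof -
  have "\<forall>(f, S, I) \<in> \<S>. simple_hom f \<and> positive_hom f \<and> S = support01 f \<and> I \<subseteq> S
      \<and> fundamental_domain f I"
    using assms(1) unfolding fundamental_system_def by (rule conjunct1)
  from bspec[OF this assms(2)]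
  show "simple_hom f" "positive_hom f" "S = support01 f" "fundamental_domain f I" by simp_all
qed

lemma fundamental_system_nested:
  assumes "fundamental_system \<S>" "(f, S, I) \<in> \<S>" "(g, T, J) \<in> \<S>" "(f, S, I) \<noteq> (g, T, J)"
  shows "interior S \<inter> interior T = {} \<or> S \<subseteq> J \<or> T \<subseteq> I"
proof -
  have "\<forall>t1 \<in> \<S>. \<forall>t2 \<in> \<S>. t1 \<noteq> t2 \<longrightarrow>
      (let S1 = fst (snd t1); I1 = snd (snd t1); S2 = fst (snd t2); I2 = snd (snd t2) in
        interior S1 \<inter> interior S2 = {} \<or> S1 \<subseteq> I2 \<or> S2 \<subseteq> I1)"
    using assms(1) unfolding fundamental_system_def by (rule conjunct2)
  from this[rule_format, OF assms(2-4)] show ?thesis by (simp add: Let_def)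
qed

lemma fundamental_system_incr:
  assumes "fundamental_system \<S>" "(f, S, I) \<in> \<S>"
  shows "incr_hom01 f"
  using fundamental_system_member[OF assms] positive_hom01_incr simple_hom_def by blast

lemma fundamental_system_shift:
  assumes "fundamental_system \<S>" "(f, S, I) \<in> \<S>"
  obtains a b x where "0 \<le> a" "b \<le> 1" "a < x" "x < b" "S = {a..b}" "I = {x..f x}"
    "interval_shift f a b" "\<And>z. z \<in> {0..1} - {a<..<b} \<Longrightarrow> f z = z"
proof -
  note member = fundamental_system_member[OF assms]
  obtain a b where ab: "0 \<le> a" "a < b" "b \<le> 1" "support01 f = {a..b}"
    "\<And>z. a < z \<Longrightarrow> z < b \<Longrightarrow> z < f z" "\<And>z. z \<in> {0..1} - {a<..<b} \<Longrightarrow> f z = z"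
    using simple_positive_support[OF member(1,2)] by blast
  obtain x where x: "a < x" "x < b" "I = {x..f x}"
    using member(4) ab(2,4) unfolding fundamental_domain_def by auto
  have incr: "incr_hom01 f" using fundamental_system_incr[OF assms] .
  have "f a = a" "f b = b" using ab(6)[of a] ab(6)[of b] ab(1-3) by auto
  then have "f ` {a..b} = {a..b}" using incr_hom01_image_interval[OF incr ab(1)] ab(2,3) by simp
  moreover have "strict_mono_on {a..b} f"
    using incr ab(1,3) unfolding incr_hom01_def by (auto intro: monotone_on_subset)
  ultimately have "interval_shift f a b" using ab by unfold_locales auto
  then show ?thesis using that ab x member(3) by blast
qed

lemma fundamental_system_support:
  assumes "fundamental_system \<S>" "(f, S, I) \<in> \<S>"
  shows "S \<subseteq> {0..1}" "\<And>z. z \<in> S \<Longrightarrow> f z \<in> S" "\<And>z. z \<in> {0..1} - S \<Longrightarrow> f z = z"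
proof -
  obtain a b where "0 \<le> a" "b \<le> 1" "S = {a..b}" "interval_shift f a b"
    "\<And>z. z \<in> {0..1} - {a<..<b} \<Longrightarrow> f z = z"
    using fundamental_system_shift[OF assms] by metis
  then show "S \<subseteq> {0..1}" "\<And>z. z \<in> S \<Longrightarrow> f z \<in> S" "\<And>z. z \<in> {0..1} - S \<Longrightarrow> f z = z"
    using interval_shift.f_in by auto
qed

text \<open>A support not longer than \<open>S\<close> cannot contain \<open>S\<close> in a fundamental domain, so by nesting it
  lies on one side of \<open>S\<close> or inside its fundamental domain \<open>I\<close>.\<close>

lemma fundamental_system_shorter_support:
  assumes fs: "fundamental_system \<S>" and t: "(f, S, I) \<in> \<S>" "(g, T, J) \<in> \<S>" "(g, T, J) \<noteq> (f, S, I)"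
    and S: "S = {a..b}" and shorter: "Sup T - Inf T \<le> b - a"
  shows "T \<subseteq> {..a} \<or> T \<subseteq> {b..} \<or> T \<subseteq> I"
proof -
  obtain a' b' x' where t': "a' < x'" "x' < b'" "T = {a'..b'}" "J = {x'..g x'}" "interval_shift g a' b'"
    using fundamental_system_shift[OF fs t(2)] by metis
  have "g x' < b'" using interval_shift.f_interior[OF t'(5) t'(1,2)] by simp
  have "a < b" using shorter t' by simp
  consider "interior T \<inter> interior S = {}" | "T \<subseteq> I" | "S \<subseteq> J"
    using fundamental_system_nested[OF fs t(2,1,3)] by blast
  then show ?thesis
  proof cases
    case 1
    then have "{a'<..<b'} \<inter> {a<..<b} = {}" using S t'(3) by simp
    have "b' \<le> a \<or> b \<le> a'"
    proof (rule ccontr)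
      assume "\<not> (b' \<le> a \<or> b \<le> a')"
      then have "(max a a' + min b b') / 2 \<in> {a'<..<b'} \<inter> {a<..<b}"
        using \<open>a < b\<close> t'(1,2) by (auto simp: max_def min_def)
      then show False using \<open>{a'<..<b'} \<inter> {a<..<b} = {}\<close> by blast
    qed
    then show ?thesis using t'(3) by auto
  next
    case 3
    then have "x' \<le> a" "b \<le> g x'" using S t'(4) \<open>a < b\<close> by auto
    then show ?thesis using shorter t' \<open>g x' < b'\<close> by simp
  qed simp
qed

section \<open>Conjugating fundamental systems\<close>

locale fundamental_system_iso =
  fixes \<S> \<Sigma> :: "triple set" and h :: "real \<Rightarrow> real" and \<phi> :: "triple \<Rightarrow> triple"
  assumes fs_\<S>: "fundamental_system \<S>" and fs_\<Sigma>: "fundamental_system \<Sigma>"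
    and h: "incr_hom01 h" and maps: "\<phi> ` \<S> \<subseteq> \<Sigma>"
    and supports: "\<And>f S I. (f, S, I) \<in> \<S> \<Longrightarrow>
       fst (snd (\<phi> (f, S, I))) = h ` S \<and> snd (snd (\<phi> (f, S, I))) = h ` I"
begin

lemma image_fixes:
  assumes "(f, S, I) \<in> \<S>"
  shows "\<And>z. z \<in> {0..1} - h ` S \<Longrightarrow> fst (\<phi> (f, S, I)) z = z"
proof -
  obtain g T J where "\<phi> (f, S, I) = (g, T, J)" by (metis prod_cases3)
  then show "\<And>z. z \<in> {0..1} - h ` S \<Longrightarrow> fst (\<phi> (f, S, I)) z = z"
    using fundamental_system_support(3)[OF fs_\<Sigma>, of g T J] maps supports[OF assms] assms by auto
qed

lemma image_shift:
  assumes "(f, S, I) \<in> \<S>"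
  obtains a b x where "0 \<le> a" "b \<le> 1" "a < x" "x < b" "S = {a..b}" "I = {x..f x}"
    "interval_shift f a b" "interval_shift (fst (\<phi> (f, S, I))) (h a) (h b)"
    "fst (\<phi> (f, S, I)) (h x) = h (f x)"
proof -
  obtain a b x where f: "0 \<le> a" "b \<le> 1" "a < x" "x < b" "S = {a..b}" "I = {x..f x}"
    "interval_shift f a b"
    using fundamental_system_shift[OF fs_\<S> assms] by metis
  have fx: "x < f x" "f x < b" using interval_shift.f_interior[OF f(7) f(3,4)] by auto
  obtain g T J where \<phi>: "\<phi> (f, S, I) = (g, T, J)" by (metis prod_cases3)
  obtain c d y where g: "c < y" "y < d" "T = {c..d}" "J = {y..g y}" "interval_shift g c d"
    using fundamental_system_shift[OF fs_\<Sigma>, of g T J] maps \<phi> assms by (metis image_subset_iff)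
  have "g y > y" using interval_shift.f_interior[OF g(5) g(1,2)] by simp
  have "{c..d} = {h a..h b}" "{y..g y} = {h x..h (f x)}"
    using supports[OF assms] incr_hom01_image_interval[OF h] f fx g \<phi> by auto
  moreover have "h a \<le> h b" "h x \<le> h (f x)"
    using incr_hom01_less[OF h, of a b] incr_hom01_less[OF h, of x "f x"] f fx by auto
  ultimately have "c = h a" "d = h b" "y = h x" "g y = h (f x)"
    using g(1,2) \<open>y < g y\<close> by (simp_all only: Icc_eq_Icc) auto
  then show ?thesis using g(5) \<phi> by (intro that[OF f]) simp_all
qed

text \<open>The invariant of the induction over the triples: agreement with \<open>h\<close> away from the
  supports keeps the endpoints of supports still to be processed where \<open>h\<close> puts them.\<close>

definition conjugacy_on :: "triple set \<Rightarrow> (real \<Rightarrow> real) \<Rightarrow> bool" where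
  "conjugacy_on \<T> ht \<longleftrightarrow> incr_hom01 ht
     \<and> (\<forall>z\<in>{0..1}. (\<forall>(f, S, I)\<in>\<T>. z \<notin> interior S) \<longrightarrow> ht z = h z)
     \<and> (\<forall>(f, S, I)\<in>\<T>. ht ` S = h ` S \<and> (\<forall>z\<in>{0..1}. ht (f z) = fst (\<phi> (f, S, I)) (ht z)))"

lemma conjugacy_on_incr: "conjugacy_on \<T> ht \<Longrightarrow> incr_hom01 ht"
  unfolding conjugacy_on_def by simp

lemma conjugacy_on_conj:
  assumes "conjugacy_on \<T> ht" "t \<in> \<T>" "z \<in> {0..1}"
  shows "ht (fst t z) = fst (\<phi> t) (ht z)"
proof -
  obtain f S I where t: "t = (f, S, I)" by (metis prod_cases3)
  have "\<forall>(f, S, I) \<in> \<T>. ht ` S = h ` S \<and> (\<forall>z\<in>{0..1}. ht (f z) = fst (\<phi> (f, S, I)) (ht z))"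
    using assms(1) unfolding conjugacy_on_def by (elim conjE)
  from bspec[OF this assms(2)[unfolded t]] show ?thesis using assms(3) unfolding t by simp
qed

lemma conjugacy_on_empty: "conjugacy_on {} h"
  unfolding conjugacy_on_def using h by simp

lemma conjugacy_on_change:
  assumes "conjugacy_on \<T> ht'" "incr_hom01 ht" "(f, S, I) \<in> \<T>" "\<T> \<subseteq> \<S>"
    and agree: "\<And>z. z \<in> S \<Longrightarrow> ht z = ht' z"
  shows "ht ` S = h ` S" "\<And>z. z \<in> {0..1} \<Longrightarrow> ht (f z) = fst (\<phi> (f, S, I)) (ht z)"
proof -
  have t: "(f, S, I) \<in> \<S>" using subsetD[OF assms(4,3)] .
  have "\<forall>(f, S, I)\<in>\<T>. ht' ` S = h ` S \<and> (\<forall>z\<in>{0..1}. ht' (f z) = fst (\<phi> (f, S, I)) (ht' z))"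
    using assms(1) unfolding conjugacy_on_def by (elim conjE)
  from bspec[OF this assms(3)]
  have old: "ht' ` S = h ` S" "\<forall>z\<in>{0..1}. ht' (f z) = fst (\<phi> (f, S, I)) (ht' z)"
    by simp_all
  note S = fundamental_system_support[OF fs_\<S> t]
  have "ht ` S = ht' ` S" using agree by (rule image_cong[OF refl])
  then show img: "ht ` S = h ` S" using old(1) by simp
  have "ht (f z) = fst (\<phi> (f, S, I)) (ht z)" if "z \<in> S" for z
    using agree[of z] agree[of "f z"] bspec[OF old(2), of z] S(1,2) that by auto
  then show "\<And>z. z \<in> {0..1} \<Longrightarrow> ht (f z) = fst (\<phi> (f, S, I)) (ht z)"
    using conjugate_off_support[OF assms(2) S(1) img S(3) image_fixes[OF t]] by blast
qed

lemma conjugacy_on_insertI: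
  assumes ht': "conjugacy_on \<T> ht'" and ht: "incr_hom01 ht" and \<T>: "\<T> \<subseteq> \<S>"
    and t0: "(f, S, I) \<in> \<S>"
    and outside: "\<And>z. z \<notin> interior S \<Longrightarrow> ht z = ht' z"
    and agree: "\<And>g T J z. (g, T, J) \<in> \<T> \<Longrightarrow> z \<in> T \<Longrightarrow> ht z = ht' z"
    and S_img: "ht ` S = h ` S" and on_S: "\<And>z. z \<in> S \<Longrightarrow> ht (f z) = fst (\<phi> (f, S, I)) (ht z)"
  shows "conjugacy_on (insert (f, S, I) \<T>) ht"
proof -
  note S = fundamental_system_support[OF fs_\<S> t0]
  have "\<forall>z\<in>{0..1}. ht (f z) = fst (\<phi> (f, S, I)) (ht z)"
    using conjugate_off_support[OF ht S(1) S_img S(3) image_fixes[OF t0]] on_S by blast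
  moreover have "\<forall>z\<in>{0..1}. (\<forall>(g, T, J)\<in>insert (f, S, I) \<T>. z \<notin> interior T) \<longrightarrow> ht z = h z"
  proof (intro ballI impI)
    fix z :: real assume z: "z \<in> {0..1}" "\<forall>(g, T, J)\<in>insert (f, S, I) \<T>. z \<notin> interior T"
    then have "z \<notin> interior S" "\<forall>(g, T, J)\<in>\<T>. z \<notin> interior T" by simp_all
    then show "ht z = h z" using outside ht' z(1) unfolding conjugacy_on_def by simp
  qed
  moreover have "\<forall>(g, T, J)\<in>\<T>. ht ` T = h ` T \<and> (\<forall>z\<in>{0..1}. ht (g z) = fst (\<phi> (g, T, J)) (ht z))"
  proof (intro ballI)
    fix t assume "t \<in> \<T>"
    moreover obtain g T J where "t = (g, T, J)" by (metis prod_cases3)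
    ultimately show "case t of (g, T, J) \<Rightarrow>
        ht ` T = h ` T \<and> (\<forall>z\<in>{0..1}. ht (g z) = fst (\<phi> (g, T, J)) (ht z))"
      using conjugacy_on_change[OF ht' ht _ \<T> agree] by simp
  qed
  ultimately show ?thesis
    unfolding conjugacy_on_def using ht S_img by simp
qed

text \<open>A support \<open>S\<close> of maximal length is processed last: the shorter supports meet \<open>(a,b)\<close> only
  inside the fundamental domain, where the conjugacy built so far is kept.\<close>

lemma conjugacy_on_insert:
  assumes t0: "(f, S, I) \<in> \<S>" and \<T>: "\<T> \<subseteq> \<S>" "(f, S, I) \<notin> \<T>"
    and longest: "\<And>g T J. (g, T, J) \<in> \<T> \<Longrightarrow> Sup T - Inf T \<le> Sup S - Inf S"
    and ht': "conjugacy_on \<T> ht'"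
  shows "\<exists>ht. conjugacy_on (insert (f, S, I) \<T>) ht"
proof -
  obtain a b x where ab: "0 \<le> a" "b \<le> 1" "a < x" "x < b" "S = {a..b}" "I = {x..f x}"
    and f: "interval_shift f a b" and g: "interval_shift (fst (\<phi> (f, S, I))) (h a) (h b)"
    and gx: "fst (\<phi> (f, S, I)) (h x) = h (f x)"
    using image_shift[OF t0] by metis
  have fx: "x < f x" "f x < b" using interval_shift.f_interior[OF f ab(3,4)] by auto
  note incr' = conjugacy_on_incr[OF ht']
  have out': "\<And>z. z \<in> {0..1} \<Longrightarrow> (\<forall>(g, T, J)\<in>\<T>. z \<notin> interior T) \<Longrightarrow> ht' z = h z"
    using ht' unfolding conjugacy_on_def by blast
  have position: "T \<subseteq> {..a} \<or> T \<subseteq> {b..} \<or> T \<subseteq> {x..f x}" if "(g, T, J) \<in> \<T>" for g T J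
    using fundamental_system_shorter_support[OF fs_\<S> t0, of g T J a b] longest[OF that] that \<T> ab
    by auto
  have boundary: "ht' z = h z" if "z \<in> {a, b, x, f x}" for z
  proof (rule out')
    show "z \<in> {0..1}" using that ab fx by auto
    have "z \<notin> interior T" if "(g, T, J) \<in> \<T>" for g T J
    proof -
      have "interior T \<subseteq> {..<a} \<or> interior T \<subseteq> {b<..} \<or> interior T \<subseteq> {x<..<f x}"
        using position[OF that] by (elim disjE) (drule interior_mono, simp)+
      then show ?thesis using \<open>z \<in> {a, b, x, f x}\<close> ab(3,4) fx by auto
    qed
    then show "\<forall>(g, T, J)\<in>\<T>. z \<notin> interior T" by auto
  qed
  then obtain ht where ht: "incr_hom01 ht" "\<And>z. z \<notin> {a<..<b} \<Longrightarrow> ht z = ht' z"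
    "\<And>z. z \<in> {x..f x} \<Longrightarrow> ht z = ht' z" "ht ` {a..b} = ht' ` {a..b}"
    "\<And>z. z \<in> {a..b} \<Longrightarrow> ht (f z) = fst (\<phi> (f, S, I)) (ht z)"
    using interval_shift_conjugating_patch[OF incr' f _ ab(1-4)] g gx by auto
  have "ht ` S = h ` S"
    using ht(4) incr_hom01_image_interval[OF incr'] incr_hom01_image_interval[OF h] boundary ab
    by simp
  moreover have "ht z = ht' z" if "(g, T, J) \<in> \<T>" "z \<in> T" for g T J z
    using position[OF that(1)] that(2) ht(2,3) by fastforce
  ultimately have "conjugacy_on (insert (f, S, I) \<T>) ht"
    using conjugacy_on_insertI[OF ht' ht(1) \<T>(1) t0] ht(2,5) ab(5) by simp
  then show ?thesis by blast
qed

lemma conjugacy_on_exists: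
  assumes "finite \<T>" "\<T> \<subseteq> \<S>"
  shows "\<exists>ht. conjugacy_on \<T> ht"
  using assms
proof (induction \<T> rule: finite_ranking_induct[where f = "\<lambda>(g, T, J). Sup T - Inf T"])
  case (insert t \<T>)
  obtain f S I where t: "t = (f, S, I)" by (metis prod_cases3)
  show ?case
  proof (cases "t \<in> \<T>")
    case False
    have "Sup T - Inf T \<le> Sup S - Inf S" if "(g, T, J) \<in> \<T>" for g T J
      using insert.hyps(2)[OF that] t by simp
    moreover obtain ht' where "conjugacy_on \<T> ht'" using insert.IH insert.prems by blast
    ultimately show ?thesis
      using conjugacy_on_insert[of f S I \<T> ht'] insert.prems False t by blast
  next
    case True
    then show ?thesis using insert.IH insert.prems by (simp add: insert_absorb)
  qed
next
  case empty
  then show ?case using conjugacy_on_empty by blast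
qed

end

section \<open>Conjugating the generated groups\<close>

lemma gen_group_maps_01:
  assumes "g \<in> gen_group F" "\<forall>f\<in>F. incr_hom01 f" "z \<in> {0..1}"
  shows "g z \<in> {0..1}"
  using assms
proof (induction arbitrary: z rule: gen_group.induct)
  case (gen_inv f g)
  then show ?case using incr_hom01_inv_into(1) by simp
next
  case (gen_mul f g)
  then show ?case using incr_hom01_in by simp
qed simp

lemma conjugate_inverse:
  assumes ht: "incr_hom01 ht" and f: "incr_hom01 f" and g: "incr_hom01 g"
    and conj: "\<And>z. z \<in> {0..1} \<Longrightarrow> ht (f z) = g (ht z)" and z: "z \<in> {0..1}"
  shows "ht (inv_into {0..1} f z) = inv_into {0..1} g (ht z)"
proof -
  note w = incr_hom01_inv_into[OF f z]
  have "g (ht (inv_into {0..1} f z)) = ht z" using conj[OF w(1)] w(2) by simp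
  then show ?thesis
    using inv_into_f_f[OF incr_hom01_inj[OF g] incr_hom01_in[OF ht w(1)]] by simp
qed

lemma conjugate_restrict_comp:
  assumes ht: "incr_hom01 ht" and conj: "\<And>z. z \<in> {0..1} \<Longrightarrow> ht (f z) = g (ht z)"
    and maps: "\<And>z. z \<in> {0..1} \<Longrightarrow> w z \<in> {0..1}"
  shows "restrict (ht \<circ> restrict (f \<circ> w) {0..1} \<circ> inv_into {0..1} ht) {0..1}
       = restrict (g \<circ> restrict (ht \<circ> w \<circ> inv_into {0..1} ht) {0..1}) {0..1}"
proof
  fix z show "restrict (ht \<circ> restrict (f \<circ> w) {0..1} \<circ> inv_into {0..1} ht) {0..1} z
       = restrict (g \<circ> restrict (ht \<circ> w \<circ> inv_into {0..1} ht) {0..1}) {0..1} z"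
    using conj maps incr_hom01_inv_into(1)[OF ht] by simp
qed

lemma conjugate_restrict_id:
  assumes "incr_hom01 ht"
  shows "restrict (ht \<circ> restrict id {0..1} \<circ> inv_into {0..1} ht) {0..1} = restrict id {0..1}"
  using incr_hom01_inv_into[OF assms] by (auto intro!: ext)

lemma gen_group_conjugate:
  assumes ht: "incr_hom01 ht" and \<alpha>: "\<And>i. i \<in> A \<Longrightarrow> incr_hom01 (\<alpha> i)"
    and \<beta>: "\<And>i. i \<in> A \<Longrightarrow> incr_hom01 (\<beta> i)"
    and conj: "\<And>i z. i \<in> A \<Longrightarrow> z \<in> {0..1} \<Longrightarrow> ht (\<alpha> i z) = \<beta> i (ht z)"
  shows "gen_group (\<beta> ` A) = (\<lambda>g. restrict (ht \<circ> g \<circ> inv_into {0..1} ht) {0..1}) ` gen_group (\<alpha> ` A)"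
    (is "_ = ?C ` _")
proof -
  have mul: "?C (restrict (\<alpha> i \<circ> g) {0..1}) = restrict (\<beta> i \<circ> ?C g) {0..1}"
    and inv: "?C (restrict (inv_into {0..1} (\<alpha> i) \<circ> g) {0..1})
      = restrict (inv_into {0..1} (\<beta> i) \<circ> ?C g) {0..1}"
    if "i \<in> A" "g \<in> gen_group (\<alpha> ` A)" for i g
  proof -
    have maps: "\<And>z. z \<in> {0..1} \<Longrightarrow> g z \<in> {0..1}"
      using gen_group_maps_01[OF that(2)] \<alpha> by blast
    show "?C (restrict (\<alpha> i \<circ> g) {0..1}) = restrict (\<beta> i \<circ> ?C g) {0..1}"
      by (rule conjugate_restrict_comp[of ht "\<alpha> i" "\<beta> i" g, OF ht conj[OF that(1)] maps])
    show "?C (restrict (inv_into {0..1} (\<alpha> i) \<circ> g) {0..1})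
      = restrict (inv_into {0..1} (\<beta> i) \<circ> ?C g) {0..1}"
      by (rule conjugate_restrict_comp[of ht "inv_into {0..1} (\<alpha> i)" "inv_into {0..1} (\<beta> i)" g,
          OF ht conjugate_inverse[OF ht \<alpha>[OF that(1)] \<beta>[OF that(1)] conj[OF that(1)]] maps])
  qed
  have "?C g \<in> gen_group (\<beta> ` A)" if "g \<in> gen_group (\<alpha> ` A)" for g
    using that
  proof (induction rule: gen_group.induct)
    case gen_id
    show ?case unfolding conjugate_restrict_id[OF ht] by (rule gen_group.gen_id)
  next
    case (gen_mul f g)
    from gen_mul.hyps(1) obtain i where i: "i \<in> A" "f = \<alpha> i" by blast
    have "restrict (\<beta> i \<circ> ?C g) {0..1} \<in> gen_group (\<beta> ` A)"
      using gen_group.gen_mul[OF imageI[OF i(1)] gen_mul.IH] .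
    then show ?case unfolding i(2) mul[OF i(1) gen_mul.hyps(2)] .
  next
    case (gen_inv f g)
    from gen_inv.hyps(1) obtain i where i: "i \<in> A" "f = \<alpha> i" by blast
    have "restrict (inv_into {0..1} (\<beta> i) \<circ> ?C g) {0..1} \<in> gen_group (\<beta> ` A)"
      using gen_group.gen_inv[OF imageI[OF i(1)] gen_inv.IH] .
    then show ?case unfolding i(2) inv[OF i(1) gen_inv.hyps(2)] .
  qed
  moreover have "g' \<in> ?C ` gen_group (\<alpha> ` A)" if "g' \<in> gen_group (\<beta> ` A)" for g'
    using that
  proof (induction rule: gen_group.induct)
    case gen_id
    have "?C (restrict id {0..1}) \<in> ?C ` gen_group (\<alpha> ` A)" by (rule imageI[OF gen_group.gen_id])
    then show ?case unfolding conjugate_restrict_id[OF ht] .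
  next
    case (gen_mul f g')
    from gen_mul.hyps(1) gen_mul.IH obtain i g where i: "i \<in> A" "f = \<beta> i"
      and g: "g \<in> gen_group (\<alpha> ` A)" "g' = ?C g" by blast
    have "restrict (\<alpha> i \<circ> g) {0..1} \<in> gen_group (\<alpha> ` A)"
      using gen_group.gen_mul[OF imageI[OF i(1)] g(1)] .
    then show ?case unfolding i(2) g(2) mul[OF i(1) g(1), symmetric] by (rule imageI)
  next
    case (gen_inv f g')
    from gen_inv.hyps(1) gen_inv.IH obtain i g where i: "i \<in> A" "f = \<beta> i"
      and g: "g \<in> gen_group (\<alpha> ` A)" "g' = ?C g" by blast
    have "restrict (inv_into {0..1} (\<alpha> i) \<circ> g) {0..1} \<in> gen_group (\<alpha> ` A)"
      using gen_group.gen_inv[OF imageI[OF i(1)] g(1)] .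
    then show ?case unfolding i(2) g(2) inv[OF i(1) g(1), symmetric] by (rule imageI)
  qed
  ultimately show ?thesis by blast
qed

context fundamental_system_iso
begin

lemma conjugacy_on_gen_group:
  assumes ht: "conjugacy_on \<S> ht" and onto: "\<phi> ` \<S> = \<Sigma>"
  shows "gen_group (fst ` \<Sigma>) = (\<lambda>g. restrict (ht \<circ> g \<circ> inv_into {0..1} ht) {0..1}) ` gen_group (fst ` \<S>)"
proof -
  have incr: "incr_hom01 (fst t)" if "t \<in> \<S> \<union> \<Sigma>" for t
    using that fundamental_system_incr[OF fs_\<S>] fundamental_system_incr[OF fs_\<Sigma>]
    by (metis UnE prod.collapse)
  have "gen_group ((fst \<circ> \<phi>) ` \<S>)
      = (\<lambda>g. restrict (ht \<circ> g \<circ> inv_into {0..1} ht) {0..1}) ` gen_group (fst ` \<S>)"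
  proof (rule gen_group_conjugate[OF conjugacy_on_incr[OF ht]])
    show "\<And>i. i \<in> \<S> \<Longrightarrow> incr_hom01 (fst i)" "\<And>i. i \<in> \<S> \<Longrightarrow> incr_hom01 ((fst \<circ> \<phi>) i)"
      using incr onto by (simp, metis UnI2 comp_apply imageI)
  qed (simp add: conjugacy_on_conj[OF ht])
  moreover have "(fst \<circ> \<phi>) ` \<S> = fst ` \<Sigma>" unfolding onto[symmetric] by (rule image_comp[symmetric])
  ultimately show ?thesis by simp
qed

end

theorem mainTheorem20:
  fixes \<S> \<Sigma> :: "triple set" and h :: "real \<Rightarrow> real" and \<phi> :: "triple \<Rightarrow> triple"
  assumes "finite \<S>" and "finite \<Sigma>"
    and "fundamental_system \<S>" and "fundamental_system \<Sigma>"
    and "orient_pres_hom01 h"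
    and "bij_betw \<phi> \<S> \<Sigma>"
    and "\<And>f S I. (f, S, I) \<in> \<S> \<Longrightarrow>
            fst (snd (\<phi> (f, S, I))) = h ` S \<and> snd (snd (\<phi> (f, S, I))) = h ` I"
  shows "\<exists>ht. hom01 ht \<and>
           (\<forall>(f, S, I) \<in> \<S>. \<forall>x \<in> {0..1}.
               ht (f (inv_into {0..1} ht x)) = fst (\<phi> (f, S, I)) x) \<and>
           gen_group (fst ` \<Sigma>) =
             (\<lambda>g. restrict (ht \<circ> g \<circ> inv_into {0..1} ht) {0..1}) ` gen_group (fst ` \<S>)"
proof -
  have onto: "\<phi> ` \<S> = \<Sigma>" using assms(6) by (rule bij_betw_imp_surj_on)
  interpret fundamental_system_iso \<S> \<Sigma> h \<phi>
    using assms(3,4,7) orient_pres_hom01_incr[OF assms(5)] onto by unfold_locales simp_all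
  obtain ht where ht: "conjugacy_on \<S> ht" using conjugacy_on_exists[OF assms(1) order_refl] by blast
  note incr = conjugacy_on_incr[OF ht]
  have "ht (f (inv_into {0..1} ht x)) = fst (\<phi> (f, S, I)) x" if "(f, S, I) \<in> \<S>" "x \<in> {0..1}" for f S I x
    using conjugacy_on_conj[OF ht that(1) incr_hom01_inv_into(1)[OF incr that(2)]]
      incr_hom01_inv_into(2)[OF incr that(2)] by simp
  then have "\<forall>(f, S, I) \<in> \<S>. \<forall>x \<in> {0..1}. ht (f (inv_into {0..1} ht x)) = fst (\<phi> (f, S, I)) x"
    by fast
  then show ?thesis using incr_hom01_imp_hom01[OF incr] conjugacy_on_gen_group[OF ht onto] by blast
qed

end
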